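(* $(\mathbb{S},\sigma)$ is not a final $F$-coalgebra in $\mathbf{Met_3}^{L}$.
   Context: A tripointed metric space is a set with three distinct points $T,L,R$ and a metric bounded by $1$ in which $T,L,R$ have pairwise distance $1$. $\mathbf{Met_3}^{L}$: tripointed metric spaces with Lipschitz maps preserving $T,L,R$. Let $M=\{a,b,c\}$. $M\times X$ has metric $\tfrac12d(x,y)$ within a copy and $1$ between copies; $M\otimes X$ is the quotient metric space by the equivalence relation generated by $(b,T)\sim(a,L)$, $(a,R)\sim(c,T)$, $(c,L)\sim(b,R)$, with elements $m\otimes x$ and distinguished points $a\otimes T,b\otimes L,c\otimes R$; $F=M\otimes-$ with $(M\otimes f)(m\otimes x)=m\otimes f(x)$. The Sierpinski gasket $\mathbb{S}\subset\mathbb{R}^2$ is the unique nonempty compact set with $\mathbb{S}=\sigma_a(\mathbb{S})\cup\sigma_b(\mathbb{S})\cup\sigma_c(\mathbb{S})$, where $\sigma_a(x,y)=(x/2,y/2)+(1/4,\sqrt3/4)$, $\sigma_b(x,y)=(x/2,y/2)$, $\sigma_c(x,y)=(x/2,y/2)+(1/2,0)$, with the Euclidean metric and distinguished points $T=(1/2,\sqrt3/2)$, $L=(0,0)$, $R=(1,0)$. The map $\tau\colon M\otimes\mathbb{S}\to\mathbb{S}$, $\tau(m\otimes x)=\sigma_m(x)$, is a bijection preserving distinguished points, and $\sigma=\tau^{-1}$; $\sigma$ is a morphism in $\mathbf{Met_3}^{L}$, so $(\mathbb{S},\sigma)$ is an $F$-coalgebra there. *)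

theory Defs
  imports "HOL-Analysis.Analysis"
begin

record 'a tms =
  carr :: "'a set"
  dst  :: "'a \<Rightarrow> 'a \<Rightarrow> real"
  ptT  :: 'a
  ptL  :: 'a
  ptR  :: 'a

definition tri_space :: "'a tms \<Rightarrow> bool" where
  "tri_space X \<longleftrightarrow>
     (\<forall>x\<in>carr X. \<forall>y\<in>carr X. 0 \<le> dst X x y \<and> dst X x y \<le> 1
        \<and> (dst X x y = 0 \<longleftrightarrow> x = y) \<and> dst X x y = dst X y x) \<and>
     (\<forall>x\<in>carr X. \<forall>y\<in>carr X. \<forall>z\<in>carr X. dst X x z \<le> dst X x y + dst X y z) \<and>
     ptT X \<in> carr X \<and> ptL X \<in> carr X \<and> ptR X \<in> carr X \<and>
     ptT X \<noteq> ptL X \<and> ptL X \<noteq> ptR X \<and> ptT X \<noteq> ptR X \<and>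
     dst X (ptT X) (ptL X) = 1 \<and> dst X (ptL X) (ptR X) = 1 \<and> dst X (ptT X) (ptR X) = 1"

definition lip_morph :: "'a tms \<Rightarrow> 'b tms \<Rightarrow> ('a \<Rightarrow> 'b) \<Rightarrow> bool" where
  "lip_morph X Y f \<longleftrightarrow>
     (\<forall>x\<in>carr X. f x \<in> carr Y) \<and>
     f (ptT X) = ptT Y \<and> f (ptL X) = ptL Y \<and> f (ptR X) = ptR Y \<and>
     (\<exists>K\<ge>0. \<forall>x\<in>carr X. \<forall>y\<in>carr X. dst Y (f x) (f y) \<le> K * dst X x y)"

datatype mlab = Ma | Mb | Mc

definition pdist :: "('a \<Rightarrow> 'a \<Rightarrow> real) \<Rightarrow> mlab \<times> 'a \<Rightarrow> mlab \<times> 'a \<Rightarrow> real" where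
  "pdist d p q = (if fst p = fst q then d (snd p) (snd q) / 2 else 1)"

definition glue :: "'a tms \<Rightarrow> ((mlab \<times> 'a) \<times> (mlab \<times> 'a)) set" where
  "glue X = {((Mb, ptT X), (Ma, ptL X)), ((Ma, ptR X), (Mc, ptT X)), ((Mc, ptL X), (Mb, ptR X))}"

definition trel :: "'a tms \<Rightarrow> ((mlab \<times> 'a) \<times> (mlab \<times> 'a)) set" where
  "trel X = Id_on (UNIV \<times> carr X) \<union> (glue X \<union> (glue X)\<inverse>)\<^sup>+"

definition tcls :: "'a tms \<Rightarrow> mlab \<times> 'a \<Rightarrow> (mlab \<times> 'a) set" where
  "tcls X p = trel X `` {p}"

text \<open>Quotient (semi)metric: infimum over chains p0 ~> q0 ~ p1 ~> q1 ~ ... ~> qn.\<close>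
definition tdist :: "'a tms \<Rightarrow> (mlab \<times> 'a) set \<Rightarrow> (mlab \<times> 'a) set \<Rightarrow> real" where
  "tdist X P Q = Inf {(\<Sum>i\<le>n. pdist (dst X) (p i) (q i)) | n p q.
       p 0 \<in> P \<and> q n \<in> Q \<and> (\<forall>i\<le>n. p i \<in> UNIV \<times> carr X \<and> q i \<in> UNIV \<times> carr X) \<and>
       (\<forall>i<n. (q i, p (Suc i)) \<in> trel X)}"

definition tensor :: "'a tms \<Rightarrow> (mlab \<times> 'a) set tms" where
  "tensor X = \<lparr> carr = (UNIV \<times> carr X) // trel X, dst = tdist X,
                ptT = tcls X (Ma, ptT X), ptL = tcls X (Mb, ptL X), ptR = tcls X (Mc, ptR X) \<rparr>"

text \<open>(M \<otimes> f)(m \<otimes> x) = m \<otimes> f x\<close>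
definition tmap :: "'a tms \<Rightarrow> 'b tms \<Rightarrow> ('a \<Rightarrow> 'b) \<Rightarrow> (mlab \<times> 'a) set \<Rightarrow> (mlab \<times> 'b) set" where
  "tmap X Y f P = (let p = (SOME p. p \<in> P) in tcls Y (fst p, f (snd p)))"

definition is_coalg :: "'a tms \<Rightarrow> ('a \<Rightarrow> (mlab \<times> 'a) set) \<Rightarrow> bool" where
  "is_coalg X e \<longleftrightarrow> tri_space X \<and> lip_morph X (tensor X) e"

definition coalg_morph ::
  "'a tms \<Rightarrow> ('a \<Rightarrow> (mlab \<times> 'a) set) \<Rightarrow> 'b tms \<Rightarrow> ('b \<Rightarrow> (mlab \<times> 'b) set) \<Rightarrow> ('a \<Rightarrow> 'b) \<Rightarrow> bool" where
  "coalg_morph Y f X e h \<longleftrightarrow> lip_morph Y X h \<and> (\<forall>y\<in>carr Y. e (h y) = tmap Y X h (f y))"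

text \<open>Finality, tested against all coalgebras whose carrier lives in the type 'b.\<close>
definition final_coalg :: "'b itself \<Rightarrow> 'a tms \<Rightarrow> ('a \<Rightarrow> (mlab \<times> 'a) set) \<Rightarrow> bool" where
  "final_coalg (_ :: 'b itself) X e \<longleftrightarrow> is_coalg X e \<and>
     (\<forall>(Y :: 'b tms) f. is_coalg Y f \<longrightarrow>
        (\<exists>h. coalg_morph Y f X e h \<and> (\<forall>h'. coalg_morph Y f X e h' \<longrightarrow> (\<forall>y\<in>carr Y. h' y = h y))))"

definition smap :: "mlab \<Rightarrow> real \<times> real \<Rightarrow> real \<times> real" where
  "smap m = (\<lambda>(x, y). case m of
      Ma \<Rightarrow> (x / 2 + 1 / 4, y / 2 + sqrt 3 / 4)
    | Mb \<Rightarrow> (x / 2, y / 2)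
    | Mc \<Rightarrow> (x / 2 + 1 / 2, y / 2))"

definition gasket :: "(real \<times> real) set" where
  "gasket = (THE S. S \<noteq> {} \<and> compact S \<and> S = (\<Union>m. smap m ` S))"

definition Sierp :: "(real \<times> real) tms" where
  "Sierp = \<lparr> carr = gasket, dst = dist, ptT = (1 / 2, sqrt 3 / 2), ptL = (0, 0), ptR = (1, 0) \<rparr>"

definition tau :: "(mlab \<times> (real \<times> real)) set \<Rightarrow> real \<times> real" where
  "tau P = (let p = (SOME p. p \<in> P) in smap (fst p) (snd p))"

definition sigma :: "real \<times> real \<Rightarrow> (mlab \<times> (real \<times> real)) set" where
  "sigma = inv_into (carr (tensor Sierp)) tau"

end

theory Submission
  imports Defs
begin

text \<open>In fact no F-coalgebra (X, e) in Met_3^L is final. Let e be K-Lipschitz and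
  0 < \<delta> \<le> 1. The tripointed ultrametric space with points T, R and L = x_0, x_1, x_2, ...,
  where d(x_n, T) = \<delta>^n, carries the (1/\<delta>)-Lipschitz structure map x_(n+1) \<mapsto> a \<otimes> x_n.
  A coalgebra morphism h from it into (X, e) satisfies e(h x_(n+1)) = a \<otimes> h x_n.
  The map m \<otimes> x \<mapsto> d(x, T)/2 on the a-copy (and 1/2 on the other copies) is well defined
  and 1-Lipschitz on M \<otimes> X, so d(a \<otimes> h x_n, a \<otimes> T) \<ge> d(h x_n, T)/2. Hence
  d(h x_n, T) \<le> 2K d(h x_(n+1), T), i.e. d(h x_n, T) \<ge> (2K)^-n, whereas the Lipschitz
  map h gives d(h x_n, T) = O(\<delta>^n): impossible once 2K\<delta> < 1.\<close>

lemma trel_subset_carrier: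
  assumes "tri_space X"
  shows "trel X \<subseteq> (UNIV \<times> carr X) \<times> (UNIV \<times> carr X)"
proof -
  have "glue X \<union> (glue X)\<inverse> \<subseteq> (UNIV \<times> carr X) \<times> (UNIV \<times> carr X)"
    using assms unfolding glue_def tri_space_def by auto
  then have "(glue X \<union> (glue X)\<inverse>)\<^sup>+ \<subseteq> (UNIV \<times> carr X) \<times> (UNIV \<times> carr X)"
    by (rule trancl_subset_Sigma)
  then show ?thesis
    unfolding trel_def by auto
qed

lemma equiv_trel:
  assumes "tri_space X"
  shows "equiv (UNIV \<times> carr X) (trel X)"
proof (rule equivI)
  show "trel X \<subseteq> (UNIV \<times> carr X) \<times> (UNIV \<times> carr X)"
    using assms by (rule trel_subset_carrier)
  show "refl_on (UNIV \<times> carr X) (trel X)"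
    using trel_subset_carrier[OF assms] unfolding refl_on_def trel_def by auto
  have "sym ((glue X \<union> (glue X)\<inverse>)\<^sup>+)"
    by (intro sym_trancl) (auto simp: sym_def)
  then show "sym (trel X)"
    unfolding trel_def by (auto simp: sym_def)
  show "trans (trel X)"
    unfolding trel_def trans_def by (auto intro: trancl_trans)
qed

lemma trel_apsnd:
  assumes into: "\<forall>x\<in>carr Y. h x \<in> carr X"
    and pts: "h (ptT Y) = ptT X" "h (ptL Y) = ptL X" "h (ptR Y) = ptR X"
    and "(p, q) \<in> trel Y"
  shows "(apsnd h p, apsnd h q) \<in> trel X"
proof -
  let ?S = "\<lambda>Z. glue Z \<union> (glue Z)\<inverse>"
  have glue_step: "(apsnd h a, apsnd h b) \<in> ?S X" if "(a, b) \<in> ?S Y" for a b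
    using that pts unfolding glue_def by auto
  show ?thesis
  proof (cases "(p, q) \<in> Id_on (UNIV \<times> carr Y)")
    case True
    then show ?thesis
      using into unfolding trel_def by (auto simp: apsnd_def map_prod_def split: prod.splits)
  next
    case False
    then have "(p, q) \<in> (?S Y)\<^sup>+"
      using assms(5) unfolding trel_def by blast
    then have "(apsnd h p, apsnd h q) \<in> (?S X)\<^sup>+"
    proof induction
      case (base b)
      then show ?case using glue_step by blast
    next
      case (step b c)
      then show ?case using glue_step by (meson trancl_into_trancl)
    qed
    then show ?thesis
      unfolding trel_def by blast
  qed
qed

lemma tmap_tcls:
  assumes X: "tri_space X"
    and into: "\<forall>x\<in>carr Y. h x \<in> carr X"
    and pts: "h (ptT Y) = ptT X" "h (ptL Y) = ptL X" "h (ptR Y) = ptR X"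
    and a: "a \<in> UNIV \<times> carr Y"
  shows "tmap Y X h (tcls Y a) = tcls X (apsnd h a)"
proof -
  define p where "p = (SOME p. p \<in> tcls Y a)"
  have "a \<in> tcls Y a"
    using a unfolding tcls_def trel_def by auto
  then have "p \<in> tcls Y a"
    unfolding p_def by (rule someI)
  then have "(apsnd h a, apsnd h p) \<in> trel X"
    unfolding tcls_def by (intro trel_apsnd[OF into pts]) simp
  then have "tcls X (apsnd h p) = tcls X (apsnd h a)"
    using equiv_trel[OF X] unfolding tcls_def by (metis equiv_class_eq_iff)
  then show ?thesis
    unfolding tmap_def p_def[symmetric] by (simp add: apsnd_def map_prod_def split_beta)
qed

definition chain_sums :: "'a tms \<Rightarrow> (mlab \<times> 'a) set \<Rightarrow> (mlab \<times> 'a) set \<Rightarrow> real set" where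
  "chain_sums X P Q = {(\<Sum>i\<le>n. pdist (dst X) (p i) (q i)) | n p q.
       p 0 \<in> P \<and> q n \<in> Q \<and> (\<forall>i\<le>n. p i \<in> UNIV \<times> carr X \<and> q i \<in> UNIV \<times> carr X) \<and>
       (\<forall>i<n. (q i, p (Suc i)) \<in> trel X)}"

lemma tdist_eq_Inf_chain_sums: "tdist X P Q = Inf (chain_sums X P Q)"
  unfolding tdist_def chain_sums_def ..

lemma pdist_in_chain_sums:
  assumes "a \<in> UNIV \<times> carr X" "b \<in> UNIV \<times> carr X"
  shows "pdist (dst X) a b \<in> chain_sums X (tcls X a) (tcls X b)"
proof -
  have "a \<in> tcls X a" "b \<in> tcls X b"
    using assms unfolding tcls_def trel_def by auto
  then show ?thesis
    using assms unfolding chain_sums_def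
    by (intro CollectI exI[of _ 0] exI[of _ "\<lambda>_. a"] exI[of _ "\<lambda>_. b"]) simp
qed

lemma tdist_le_pdist:
  assumes X: "tri_space X" and a: "a \<in> UNIV \<times> carr X" and b: "b \<in> UNIV \<times> carr X"
  shows "tdist X (tcls X a) (tcls X b) \<le> pdist (dst X) a b"
  unfolding tdist_eq_Inf_chain_sums
proof (rule cInf_lower)
  show "pdist (dst X) a b \<in> chain_sums X (tcls X a) (tcls X b)"
    using a b by (rule pdist_in_chain_sums)
  have "0 \<le> pdist (dst X) p q" if "p \<in> UNIV \<times> carr X" "q \<in> UNIV \<times> carr X" for p q
    using X that unfolding tri_space_def pdist_def by auto
  then show "bdd_below (chain_sums X (tcls X a) (tcls X b))"
    unfolding chain_sums_def by (intro bdd_belowI[of _ 0]) (auto intro!: sum_nonneg)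
qed

lemma tdist_ge_invariant:
  fixes g :: "mlab \<times> 'a \<Rightarrow> real"
  assumes inv: "\<And>p q. (p, q) \<in> trel X \<Longrightarrow> g p = g q"
    and lip: "\<And>p q. p \<in> UNIV \<times> carr X \<Longrightarrow> q \<in> UNIV \<times> carr X \<Longrightarrow> g p - g q \<le> pdist (dst X) p q"
    and a: "a \<in> UNIV \<times> carr X" and b: "b \<in> UNIV \<times> carr X"
  shows "g a - g b \<le> tdist X (tcls X a) (tcls X b)"
  unfolding tdist_eq_Inf_chain_sums
proof (rule cInf_greatest)
  show "chain_sums X (tcls X a) (tcls X b) \<noteq> {}"
    using pdist_in_chain_sums[OF a b] by blast
  have chain: "g (p 0) - g (q n) \<le> (\<Sum>i\<le>n. pdist (dst X) (p i) (q i))"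
    if "\<forall>i\<le>n. p i \<in> UNIV \<times> carr X \<and> q i \<in> UNIV \<times> carr X"
      and "\<forall>i<n. (q i, p (Suc i)) \<in> trel X" for n p q
    using that
  proof (induction n)
    case 0
    then show ?case using lip by simp
  next
    case (Suc n)
    then have "g (q n) = g (p (Suc n))"
      and "g (p (Suc n)) - g (q (Suc n)) \<le> pdist (dst X) (p (Suc n)) (q (Suc n))"
      using inv lip by simp_all
    moreover have "g (p 0) - g (q n) \<le> (\<Sum>i\<le>n. pdist (dst X) (p i) (q i))"
      using Suc by simp
    ultimately show ?case by simp
  qed
  fix s assume "s \<in> chain_sums X (tcls X a) (tcls X b)"
  then obtain n p q where "s = (\<Sum>i\<le>n. pdist (dst X) (p i) (q i))"
    and "(a, p 0) \<in> trel X" "(b, q n) \<in> trel X"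
    and "\<forall>i\<le>n. p i \<in> UNIV \<times> carr X \<and> q i \<in> UNIV \<times> carr X"
    and "\<forall>i<n. (q i, p (Suc i)) \<in> trel X"
    unfolding chain_sums_def tcls_def by auto
  then show "g a - g b \<le> s"
    using chain[of n p q] inv[of a "p 0"] inv[of b "q n"] by simp
qed

text \<open>Well defined on M \<otimes> X because d(L, T) = d(R, T) = 1.\<close>
definition apex_dist :: "'a tms \<Rightarrow> mlab \<times> 'a \<Rightarrow> real" where
  "apex_dist X p = (if fst p = Ma then dst X (snd p) (ptT X) / 2 else 1 / 2)"

lemma apex_dist_trel:
  assumes X: "tri_space X" and "(p, q) \<in> trel X"
  shows "apex_dist X p = apex_dist X q"
proof -
  have "dst X (ptL X) (ptT X) = 1" "dst X (ptR X) (ptT X) = 1"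
    using X unfolding tri_space_def by metis+
  then have "glue X \<union> (glue X)\<inverse> \<subseteq> inv_image Id (apex_dist X)"
    unfolding glue_def apex_dist_def by auto
  then have "(glue X \<union> (glue X)\<inverse>)\<^sup>+ \<subseteq> inv_image Id (apex_dist X)"
    by (metis trancl_id trancl_mono_subset trans_Id trans_inv_image)
  then show ?thesis
    using assms(2) unfolding trel_def by auto
qed

lemma apex_dist_diff_le_pdist:
  assumes X: "tri_space X" and "p \<in> UNIV \<times> carr X" "q \<in> UNIV \<times> carr X"
  shows "apex_dist X p - apex_dist X q \<le> pdist (dst X) p q"
proof -
  obtain x y where xy: "x = snd p" "y = snd q" "x \<in> carr X" "y \<in> carr X"
    using assms by auto
  have "ptT X \<in> carr X"
    using X unfolding tri_space_def by simp
  then have "0 \<le> dst X x (ptT X)" "dst X x (ptT X) \<le> 1" "0 \<le> dst X y (ptT X)" "dst X y (ptT X) \<le> 1"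
    "0 \<le> dst X x y"
    "dst X x (ptT X) \<le> dst X x y + dst X y (ptT X)"
    using X xy unfolding tri_space_def by auto
  then show ?thesis
    using xy unfolding apex_dist_def pdist_def by auto
qed

lemma tdist_ge_dist_apex:
  assumes X: "tri_space X" and x: "x \<in> carr X"
  shows "dst X x (ptT X) / 2 \<le> tdist X (tcls X (Ma, x)) (tcls X (Ma, ptT X))"
proof -
  have T: "ptT X \<in> carr X" "dst X (ptT X) (ptT X) = 0"
    using X unfolding tri_space_def by auto
  have "apex_dist X (Ma, x) - apex_dist X (Ma, ptT X)
      \<le> tdist X (tcls X (Ma, x)) (tcls X (Ma, ptT X))"
    using x T(1) by (intro tdist_ge_invariant apex_dist_trel[OF X] apex_dist_diff_le_pdist[OF X]) auto
  then show ?thesis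
    using T(2) unfolding apex_dist_def by simp
qed

text \<open>The test coalgebra lives in the type real \<times> real over which finality is tested:
  x_n = (n, 0), T = (-1, 0), R = (-2, 0), and the distance of distinct points is the larger
  of their ranks d(x_n, T) = \<delta>^n, d(R, T) = 1.\<close>
definition seq_carrier :: "(real \<times> real) set" where
  "seq_carrier = {(-1, 0), (-2, 0)} \<union> range (\<lambda>n::nat. (real n, 0))"

definition seq_rank :: "real \<Rightarrow> real \<times> real \<Rightarrow> real" where
  "seq_rank \<delta> p = (if p = (-1, 0) then 0 else if p = (-2, 0) then 1 else \<delta> ^ nat \<lfloor>fst p\<rfloor>)"

definition seq_dist :: "real \<Rightarrow> real \<times> real \<Rightarrow> real \<times> real \<Rightarrow> real" where
  "seq_dist \<delta> p q = (if p = q then 0 else max (seq_rank \<delta> p) (seq_rank \<delta> q))"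

definition seq_space :: "real \<Rightarrow> (real \<times> real) tms" where
  "seq_space \<delta> = \<lparr>carr = seq_carrier, dst = seq_dist \<delta>, ptT = (-1, 0), ptL = (0, 0), ptR = (-2, 0)\<rparr>"

definition seq_struct :: "real \<Rightarrow> real \<times> real \<Rightarrow> (mlab \<times> (real \<times> real)) set" where
  "seq_struct \<delta> p =
     (if p = (-2, 0) then tcls (seq_space \<delta>) (Mc, p)
      else if p = (0, 0) then tcls (seq_space \<delta>) (Mb, p)
      else if p = (-1, 0) then tcls (seq_space \<delta>) (Ma, p)
      else tcls (seq_space \<delta>) (Ma, (fst p - 1, 0)))"

lemma seq_rank_simps [simp]:
  "seq_rank \<delta> (-1, 0) = 0" "seq_rank \<delta> (-2, 0) = 1" "seq_rank \<delta> (real n, 0) = \<delta> ^ n"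
  by (auto simp: seq_rank_def)

lemma seq_carrier_cases:
  assumes "p \<in> seq_carrier"
  obtains "p = (-1, 0)" | "p = (-2, 0)" | n where "p = (real n, 0)"
  using assms unfolding seq_carrier_def by blast

lemma seq_points_in_carrier [simp]:
  "(-1, 0) \<in> seq_carrier" "(-2, 0) \<in> seq_carrier" "(real n, 0) \<in> seq_carrier"
  by (auto simp: seq_carrier_def)

lemma seq_rank_bounds:
  assumes "0 < \<delta>" "\<delta> \<le> 1" "p \<in> seq_carrier"
  shows "0 \<le> seq_rank \<delta> p \<and> seq_rank \<delta> p \<le> 1 \<and> (seq_rank \<delta> p = 0 \<longleftrightarrow> p = (-1, 0))"
  using assms(3) by (cases rule: seq_carrier_cases) (use assms(1,2) in \<open>auto intro: power_le_one\<close>)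

lemma seq_dist_triangle:
  assumes "0 \<le> seq_rank \<delta> x" "0 \<le> seq_rank \<delta> y" "0 \<le> seq_rank \<delta> z"
  shows "seq_dist \<delta> x z \<le> seq_dist \<delta> x y + seq_dist \<delta> y z"
  using assms unfolding seq_dist_def by (auto simp: max_def)

lemma tri_space_seq_space:
  assumes "0 < \<delta>" "\<delta> \<le> 1"
  shows "tri_space (seq_space \<delta>)"
proof -
  note rank = seq_rank_bounds[OF assms]
  have "seq_dist \<delta> p q = 0 \<longleftrightarrow> p = q" if "p \<in> seq_carrier" "q \<in> seq_carrier" for p q
    using rank[OF that(1)] rank[OF that(2)] unfolding seq_dist_def by (auto simp: max_def)
  moreover have "0 \<le> seq_dist \<delta> p q \<and> seq_dist \<delta> p q \<le> 1 \<and> seq_dist \<delta> p q = seq_dist \<delta> q p"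
    if "p \<in> seq_carrier" "q \<in> seq_carrier" for p q
    using rank[OF that(1)] rank[OF that(2)] unfolding seq_dist_def by (auto simp: max_def)
  moreover have "seq_dist \<delta> x z \<le> seq_dist \<delta> x y + seq_dist \<delta> y z"
    if "x \<in> seq_carrier" "y \<in> seq_carrier" "z \<in> seq_carrier" for x y z
    using that rank by (intro seq_dist_triangle) auto
  moreover have "(0, 0) \<in> seq_carrier" "seq_rank \<delta> (0, 0) = 1"
    using seq_points_in_carrier(3)[of 0] seq_rank_simps(3)[of \<delta> 0] by simp_all
  ultimately show ?thesis
    unfolding tri_space_def seq_space_def by (simp add: seq_dist_def)
qed

lemma seq_struct_Suc: "seq_struct \<delta> (real (Suc n), 0) = tcls (seq_space \<delta>) (Ma, (real n, 0))"
  by (simp add: seq_struct_def)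

lemma seq_struct_cases:
  assumes "p \<in> seq_carrier"
  obtains m s where "seq_struct \<delta> p = tcls (seq_space \<delta>) (m, s)" "s \<in> seq_carrier"
    and "p = (0, 0) \<or> p = (-2, 0) \<or> m = Ma \<and> \<delta> * seq_rank \<delta> s = seq_rank \<delta> p"
proof -
  consider "p = (-1, 0)" | "p = (-2, 0)" | "p = (0, 0)" | k where "p = (real (Suc k), 0)"
    using assms by (cases rule: seq_carrier_cases) (metis of_nat_0 old.nat.exhaust)+
  then show ?thesis
  proof cases
    case 1
    then show ?thesis using that[of Ma "(-1, 0)"] by (simp add: seq_struct_def)
  next
    case 2
    then show ?thesis using that[of Mc "(-2, 0)"] by (simp add: seq_struct_def)
  next
    case 3
    then show ?thesis using that[of Mb "(0, 0)"] seq_points_in_carrier(3)[of 0] by (simp add: seq_struct_def)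
  next
    case (4 k)
    then show ?thesis
      using that[of Ma "(real k, 0)"] seq_struct_Suc[of \<delta> k] seq_rank_simps(3)[of \<delta> "Suc k"] by simp
  qed
qed

lemma lip_morph_seq_struct:
  assumes \<delta>: "0 < \<delta>" "\<delta> \<le> 1"
  shows "lip_morph (seq_space \<delta>) (tensor (seq_space \<delta>)) (seq_struct \<delta>)"
proof -
  let ?Y = "seq_space \<delta>"
  have Y: "tri_space ?Y"
    using \<delta> by (rule tri_space_seq_space)
  note rank = seq_rank_bounds[OF \<delta>]
  have carr_Y: "carr ?Y = seq_carrier" "dst ?Y = seq_dist \<delta>"
    by (simp_all add: seq_space_def)
  have "seq_struct \<delta> x \<in> carr (tensor ?Y)" if "x \<in> seq_carrier" for x
    using that by (cases rule: seq_struct_cases[where \<delta> = \<delta>])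
      (auto simp: tensor_def tcls_def carr_Y intro: quotientI)
  moreover have "seq_struct \<delta> (ptT ?Y) = ptT (tensor ?Y)" "seq_struct \<delta> (ptL ?Y) = ptL (tensor ?Y)"
    "seq_struct \<delta> (ptR ?Y) = ptR (tensor ?Y)"
    by (simp_all add: seq_struct_def tensor_def seq_space_def)
  moreover have "tdist ?Y (seq_struct \<delta> x) (seq_struct \<delta> y) \<le> (1 / \<delta>) * seq_dist \<delta> x y"
    if x: "x \<in> seq_carrier" and y: "y \<in> seq_carrier" for x y
  proof -
    obtain m s where ms: "seq_struct \<delta> x = tcls ?Y (m, s)" "s \<in> seq_carrier"
      "x = (0, 0) \<or> x = (-2, 0) \<or> m = Ma \<and> \<delta> * seq_rank \<delta> s = seq_rank \<delta> x"
      using x by (rule seq_struct_cases)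
    obtain m' s' where ms': "seq_struct \<delta> y = tcls ?Y (m', s')" "s' \<in> seq_carrier"
      "y = (0, 0) \<or> y = (-2, 0) \<or> m' = Ma \<and> \<delta> * seq_rank \<delta> s' = seq_rank \<delta> y"
      using y by (rule seq_struct_cases)
    have tdist_le: "tdist ?Y (seq_struct \<delta> x) (seq_struct \<delta> y) \<le> pdist (seq_dist \<delta>) (m, s) (m', s')"
      using tdist_le_pdist[OF Y, of "(m, s)" "(m', s')"] ms ms' carr_Y by simp
    show ?thesis
    proof (cases "x = y")
      case True
      then show ?thesis
        using tdist_le_pdist[OF Y, of "(m, s)" "(m, s)"] ms carr_Y by (simp add: pdist_def seq_dist_def)
    next
      case False
      show ?thesis
      proof (cases "x = (0, 0) \<or> x = (-2, 0) \<or> y = (0, 0) \<or> y = (-2, 0)")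
        case True
        have "seq_rank \<delta> (0, 0) = 1"
          using seq_rank_simps(3)[of \<delta> 0] by simp
        then have "seq_dist \<delta> x y = 1"
          using True False rank[OF x] rank[OF y] by (auto simp: seq_dist_def max_def)
        moreover have "pdist (seq_dist \<delta>) (m, s) (m', s') \<le> 1"
          using rank[OF ms(2)] rank[OF ms'(2)] by (auto simp: pdist_def seq_dist_def max_def)
        moreover have "1 \<le> 1 / \<delta>"
          using \<delta> by simp
        ultimately show ?thesis
          using tdist_le by simp
      next
        case False
        then have "m = Ma" "m' = Ma" "\<delta> * seq_rank \<delta> s = seq_rank \<delta> x" "\<delta> * seq_rank \<delta> s' = seq_rank \<delta> y"
          using ms(3) ms'(3) by auto
        have "pdist (seq_dist \<delta>) (m, s) (m', s') \<le> max (seq_rank \<delta> s) (seq_rank \<delta> s') / 2"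
          using \<open>m = Ma\<close> \<open>m' = Ma\<close> rank[OF ms(2)] rank[OF ms'(2)] by (auto simp: pdist_def seq_dist_def)
        also have "\<dots> = max (seq_rank \<delta> x) (seq_rank \<delta> y) / (2 * \<delta>)"
          using \<open>\<delta> * seq_rank \<delta> s = seq_rank \<delta> x\<close> \<open>\<delta> * seq_rank \<delta> s' = seq_rank \<delta> y\<close> \<delta>(1)
            max_mult_distrib_left[of \<delta> "seq_rank \<delta> s" "seq_rank \<delta> s'"]
          by (simp add: field_simps)
        also have "\<dots> \<le> (1 / \<delta>) * seq_dist \<delta> x y"
          using \<open>x \<noteq> y\<close> rank[OF x] rank[OF y] \<delta>(1) by (simp add: seq_dist_def divide_simps max_def)
        finally show ?thesis
          using tdist_le by simp
      qed
    qed
  qed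
  ultimately show ?thesis
    unfolding lip_morph_def carr_Y
    by (intro conjI exI[of _ "1 / \<delta>"]) (auto simp: seq_space_def tensor_def \<delta>(1) less_imp_le)
qed

lemma coalg_morph_from_seq_space_apex_dist:
  assumes X: "tri_space X" and e: "lip_morph X (tensor X) e"
    and K: "0 \<le> K" "\<forall>x\<in>carr X. \<forall>y\<in>carr X. dst (tensor X) (e x) (e y) \<le> K * dst X x y"
    and \<delta>: "0 < \<delta>" "\<delta> \<le> 1"
    and h: "coalg_morph (seq_space \<delta>) (seq_struct \<delta>) X e h"
  shows "1 \<le> (2 * K) ^ n * dst X (h (real n, 0)) (ptT X)"
proof -
  let ?Y = "seq_space \<delta>"
  let ?r = "\<lambda>n. dst X (h (real n, 0)) (ptT X)"
  have h_into: "\<forall>x\<in>carr ?Y. h x \<in> carr X"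
    and h_pts: "h (ptT ?Y) = ptT X" "h (ptL ?Y) = ptL X" "h (ptR ?Y) = ptR X"
    and h_comm: "\<forall>y\<in>carr ?Y. e (h y) = tmap ?Y X h (seq_struct \<delta> y)"
    using h unfolding coalg_morph_def lip_morph_def by auto
  have h_seq: "h (real n, 0) \<in> carr X" for n
    using h_into by (simp add: seq_space_def)
  have e_apex: "e (ptT X) = tcls X (Ma, ptT X)"
    using e unfolding lip_morph_def tensor_def by simp
  have step: "?r n \<le> 2 * K * ?r (Suc n)" for n
  proof -
    have "e (h (real (Suc n), 0)) = tmap ?Y X h (tcls ?Y (Ma, (real n, 0)))"
      using h_comm seq_points_in_carrier(3)[of "Suc n"] seq_struct_Suc[of \<delta> n]
      by (simp add: seq_space_def)
    also have "\<dots> = tcls X (Ma, h (real n, 0))"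
      using tmap_tcls[OF X h_into h_pts] by (simp add: seq_space_def)
    finally have e_h: "e (h (real (Suc n), 0)) = tcls X (Ma, h (real n, 0))" .
    have T: "ptT X \<in> carr X"
      using X unfolding tri_space_def by simp
    have "?r n / 2 \<le> tdist X (tcls X (Ma, h (real n, 0))) (tcls X (Ma, ptT X))"
      using X h_seq by (rule tdist_ge_dist_apex)
    also have "\<dots> = dst (tensor X) (e (h (real (Suc n), 0))) (e (ptT X))"
      using e_h e_apex by (simp add: tensor_def)
    also have "\<dots> \<le> K * ?r (Suc n)"
      using K(2) h_seq T by blast
    finally show ?thesis
      by simp
  qed
  show ?thesis
  proof (induction n)
    case 0
    have "dst X (ptL X) (ptT X) = 1"
      using X unfolding tri_space_def by metis
    then show ?case
      using h_pts by (simp add: seq_space_def)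
  next
    case (Suc n)
    have "(2 * K) ^ n * ?r n \<le> (2 * K) ^ n * (2 * K * ?r (Suc n))"
      using step K(1) by (intro mult_left_mono) auto
    with Suc show ?case
      by (simp add: algebra_simps)
  qed
qed

lemma no_coalg_morph_from_seq_space:
  assumes X: "tri_space X" and e: "lip_morph X (tensor X) e"
    and K: "0 \<le> K" "\<forall>x\<in>carr X. \<forall>y\<in>carr X. dst (tensor X) (e x) (e y) \<le> K * dst X x y"
  defines "\<delta> \<equiv> 1 / (4 * (K + 1))"
  shows "\<not> coalg_morph (seq_space \<delta>) (seq_struct \<delta>) X e h"
proof
  assume h: "coalg_morph (seq_space \<delta>) (seq_struct \<delta>) X e h"
  have \<delta>: "0 < \<delta>" "\<delta> \<le> 1" "2 * K * \<delta> \<le> 1 / 2"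
    using K(1) by (simp_all add: \<delta>_def field_simps)
  obtain C where C: "0 \<le> C"
    "\<forall>x\<in>seq_carrier. \<forall>y\<in>seq_carrier. dst X (h x) (h y) \<le> C * seq_dist \<delta> x y"
    using h unfolding coalg_morph_def lip_morph_def by (auto simp: seq_space_def)
  have "1 \<le> C * (1 / 2) ^ n" for n
  proof -
    have "h (-1, 0) = ptT X"
      using h unfolding coalg_morph_def lip_morph_def by (simp add: seq_space_def)
    moreover have "seq_dist \<delta> (real n, 0) (-1, 0) = \<delta> ^ n"
      using \<delta>(1) by (simp add: seq_dist_def max_def not_le)
    ultimately have upper: "dst X (h (real n, 0)) (ptT X) \<le> C * \<delta> ^ n"
      using C(2) seq_points_in_carrier by metis
    have "1 \<le> (2 * K) ^ n * dst X (h (real n, 0)) (ptT X)"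
      using X e K \<delta>(1,2) h by (rule coalg_morph_from_seq_space_apex_dist)
    also have "\<dots> \<le> (2 * K) ^ n * (C * \<delta> ^ n)"
      using upper K(1) by (intro mult_left_mono) auto
    also have "\<dots> = C * (2 * K * \<delta>) ^ n"
      by (simp add: power_mult_distrib)
    also have "\<dots> \<le> C * (1 / 2) ^ n"
      using C(1) K(1) \<delta> by (intro mult_left_mono power_mono) auto
    finally show ?thesis .
  qed
  moreover obtain n where "(1 / 2 :: real) ^ n < 1 / (C + 1)"
    using real_arch_pow_inv[of "1 / (C + 1)" "1 / 2"] C(1) by auto
  then have "C * (1 / 2) ^ n < 1"
    using C(1) by (simp add: field_simps)
  ultimately show False
    by (meson not_le)
qed

lemma not_final_coalg: "\<not> final_coalg TYPE(real \<times> real) X e"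
proof
  assume final: "final_coalg TYPE(real \<times> real) X e"
  then have X: "tri_space X" and e: "lip_morph X (tensor X) e"
    unfolding final_coalg_def is_coalg_def by auto
  then obtain K where K: "0 \<le> K" "\<forall>x\<in>carr X. \<forall>y\<in>carr X. dst (tensor X) (e x) (e y) \<le> K * dst X x y"
    unfolding lip_morph_def by blast
  define \<delta> where "\<delta> = 1 / (4 * (K + 1))"
  have "0 < \<delta>" "\<delta> \<le> 1"
    using K(1) by (simp_all add: \<delta>_def field_simps)
  then have "is_coalg (seq_space \<delta>) (seq_struct \<delta>)"
    unfolding is_coalg_def by (simp add: tri_space_seq_space lip_morph_seq_struct)
  then obtain h where "coalg_morph (seq_space \<delta>) (seq_struct \<delta>) X e h"
    using final unfolding final_coalg_def by blast
  with no_coalg_morph_from_seq_space[OF X e K] show False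
    unfolding \<delta>_def by blast
qed

theorem mainTheorem13:
  shows "\<not> final_coalg TYPE(real \<times> real) Sierp sigma"
  by (rule not_final_coalg)

end
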